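(* Let $p=\tfrac23$, $q=\tfrac13$, and let $g_0(z),g_1(z),g_2(z),\dots$ and $g_\beta(z)$ be the formal power series in $z$ uniquely determined by $$g_0=1+zg_\beta+qzg_2,\qquad g_\beta=qzg_1,\qquad g_1=zg_0+qzg_3,\qquad g_i=pzg_{i-1}+qzg_{i+2}\ (i\ge2).$$ Put $G(u,z)=\sum_{i\ge0}u^ig_i(z)$, write $V=uz$, $x=z^3$, and let $t=t(x)$ be the formal power series with $t(0)=0$ satisfying $x=\tfrac{27}{4}t(1-t)^2$. Then: (i) $$G(u,z)=2\,\frac{2+\frac{2}{3(1-t)}V}{(1-3t)(4-3t)}\cdot\frac{1}{1-\frac{2}{3(1-t)}V};$$ in particular, written in the variable $V$, only powers of $z$ that are multiples of $3$ appear. (ii) For $j\ge1$, $$[V^j]G=\frac{6}{(1-3t)(4-3t)}\Big(\frac23\cdot\frac1{1-t}\Big)^j,\qquad [u^j]G=z^j\frac{6}{(1-3t)(4-3t)}\Big(\frac23\cdot\frac1{1-t}\Big)^j.$$ (iii) For $j\ge1$ and $N\ge0$, $$[z^{j+3N}u^j]G(u,z)=\sum_{i=0}^N\frac{2^{2i+j-1}}{3^{2N+i+j-1}}\binom{2N+j+i}{i}.$$ (iv) For $N\ge0$, $$[z^{3N}]g_0=\sum_{i=0}^N\frac{2^{2i}}{3^{2N+i}}\binom{2N+i}{i},\qquad [z^{3N+2}]g_\beta=\frac13[z^{3N+1}]g_1=\sum_{i=0}^N\frac{2^{2i}}{3^{2N+i+1}}\binom{2N+1+i}{i}.$$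
   Context: Dual online bin-packing model: bins have size 1; at each step either a single item of size $\tfrac23$ arrives (probability $p=\tfrac23$) or a double-pack of two items of size $\tfrac13$ arrives (probability $q=\tfrac13$). State $i\ge0$ means $i$ boxes filled to $\tfrac23$; $\beta$ is an exceptional state (one box filled to $\tfrac13$). The coefficient of $z^n$ in $g_i(z)$ (resp. $g_\beta(z)$) is the probability that $n$ random steps starting from state $0$ lead to state $i$ (resp. $\beta$); these series are defined by the recursion in the claim. $[\cdot]$ denotes coefficient extraction. *)

theory Defs
  imports "HOL-Computational_Algebra.Formal_Power_Series"
begin

text \<open>t(x) evaluated at x = z^3, as a series in z\<close>
definition t_of_z :: "real fps \<Rightarrow> real fps" where
  "t_of_z t = fps_compose t (fps_X ^ 3)"

definition a_ser :: "real fps \<Rightarrow> real fps" where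
  "a_ser t = fps_const (2/3) * inverse (1 - t_of_z t)"

definition C_ser :: "real fps \<Rightarrow> real fps" where
  "C_ser t = inverse ((1 - 3 * t_of_z t) * (4 - 3 * t_of_z t))"

text \<open>Bivariate series: outer variable u, inner (coefficient) variable z; V = u z\<close>
definition V_ser :: "real fps fps" where
  "V_ser = fps_X * fps_const fps_X"

end

theory Submission
  imports Defs
begin

text \<open>
  Comparing coefficients of z^n turns the system into a recursion in n, so it has exactly one
  solution, and [z^n] g_j vanishes unless n = j + 3N.
  Coefficientwise, [z^(j+3N)] g_j = (2/3)^j 9^(-N) sum_(i<=N) (4/3)^i binom(2N+j+i, i), up to
  a factor 3/2 for j >= 1: the recursions reduce to Pascal's rule, except at the boundary g_0,
  which needs a telescoping sum. In closed form, g_0 = 4C and g_j = 6C (a z)^j for j >= 1, with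
  a = 2/(3(1-t)) and C = 1/((1-3t)(4-3t)): the defining equation of t gives a = 2/3 + a^3 z^3/3
  and 4C = 1 + 2C z^3 (a + a^2), which are exactly the equations for g_j (j >= 1) and g_0.
  Summing the geometric series in u z gives the generating function.
\<close>

definition choose_sum :: "nat \<Rightarrow> nat \<Rightarrow> real" where
  "choose_sum m N = (\<Sum>i=0..N. (4/3)^i * real ((m + i) choose i))"

lemma choose_sum_Suc:
  "choose_sum m (Suc N) = choose_sum m N + (4/3)^Suc N * real ((m + Suc N) choose Suc N)"
  by (simp add: choose_sum_def)

lemma choose_sum_Suc_Suc:
  "choose_sum (Suc m) (Suc N) = choose_sum m (Suc N) + 4/3 * choose_sum (Suc m) N"
proof -
  have shift: "choose_sum k (Suc N) = 1 + (\<Sum>i=0..N. (4/3)^Suc i * real ((k + Suc i) choose Suc i))"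
    for k unfolding choose_sum_def by (subst sum.atLeast0_atMost_Suc_shift) simp
  have pascal: "(Suc m + Suc i) choose Suc i = ((m + Suc i) choose Suc i) + ((Suc m + i) choose i)"
    for i by simp
  show ?thesis
    unfolding shift pascal of_nat_add distrib_left sum.distrib
    by (simp add: choose_sum_def sum_distrib_left mult.assoc)
qed

lemma choose_sum_telescope:
  "(\<Sum>i<k. (4/3)^i * real ((m + i) choose i) * (4 * real (Suc m) + real i))
     = 3 * real k * (4/3)^k * real ((m + k) choose k)"
proof (induction k)
  case 0
  then show ?case by simp
next
  case (Suc k)
  have absorb: "real (Suc k) * real ((m + Suc k) choose Suc k) = real (Suc (m + k)) * real ((m + k) choose k)"
    using Suc_times_binomial[of k "m + k"] by (metis add_Suc_right of_nat_mult)
  have "(\<Sum>i<Suc k. (4/3)^i * real ((m + i) choose i) * (4 * real (Suc m) + real i))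
      = (4/3)^k * 4 * (real (Suc (m + k)) * real ((m + k) choose k))"
    using Suc by (simp add: algebra_simps)
  also have "\<dots> = 3 * real (Suc k) * (4/3)^Suc k * real ((m + Suc k) choose Suc k)"
    by (simp only: absorb[symmetric]) (simp add: algebra_simps)
  finally show ?case .
qed

lemma choose_sum_combination:
  "real (Suc m) * (3 * choose_sum m K + choose_sum (Suc m) K)
     = 3 * real (Suc K) * (4/3)^Suc K * real ((m + Suc K) choose Suc K)"
proof -
  have termwise: "real (Suc m) * (3 * ((4/3)^i * real ((m + i) choose i)) + (4/3)^i * real ((Suc m + i) choose i))
      = (4/3)^i * real ((m + i) choose i) * (4 * real (Suc m) + real i)" for i
  proof -
    have "Suc m * ((Suc m + i) choose i) = (Suc m + i) * ((m + i) choose i)"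
      using binomial_absorb_comp[of "Suc m + i" i] by simp
    then have absorb: "real (Suc m) * real ((Suc m + i) choose i) = (real (Suc m) + real i) * real ((m + i) choose i)"
      by (metis of_nat_add of_nat_mult)
    have "real (Suc m) * (3 * ((4/3)^i * real ((m + i) choose i)) + (4/3)^i * real ((Suc m + i) choose i))
        = (4/3)^i * (3 * real (Suc m) * real ((m + i) choose i) + real (Suc m) * real ((Suc m + i) choose i))"
      by (simp only: algebra_simps)
    also have "\<dots> = (4/3)^i * real ((m + i) choose i) * (4 * real (Suc m) + real i)"
      by (simp only: absorb) (simp only: algebra_simps)
    finally show ?thesis .
  qed
  have "real (Suc m) * (3 * choose_sum m K + choose_sum (Suc m) K)
      = (\<Sum>i=0..K. real (Suc m) * (3 * ((4/3)^i * real ((m + i) choose i)) + (4/3)^i * real ((Suc m + i) choose i)))"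
    by (simp only: choose_sum_def sum_distrib_left sum.distrib distrib_left)
  also have "\<dots> = (\<Sum>i<Suc K. (4/3)^i * real ((m + i) choose i) * (4 * real (Suc m) + real i))"
    unfolding termwise atLeast0AtMost lessThan_Suc_atMost ..
  finally show ?thesis by (simp only: choose_sum_telescope)
qed

lemma choose_sum_diagonal:
  "choose_sum (2*K + 2) (Suc K) = 3 * choose_sum (2*K + 1) K + 2 * choose_sum (2*K + 2) K"
proof -
  have "(2*K + 2) * ((3*K + 3) choose Suc K) = (3*K + 3) * ((3*K + 2) choose Suc K)"
    using binomial_absorb_comp[of "3*K + 3" "Suc K"] by (simp del: binomial_Suc_Suc)
  then have absorb: "real (2*K + 2) * real ((3*K + 3) choose Suc K) = real (3*K + 3) * real ((3*K + 2) choose Suc K)"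
    by (metis of_nat_mult)
  have "real (2*K + 2) * (3 * choose_sum (2*K + 1) K + choose_sum (2*K + 2) K)
      = 3 * real (Suc K) * (4/3)^Suc K * real ((3*K + 2) choose Suc K)"
    using choose_sum_combination[of "2*K + 1" K] by (simp add: add_ac)
  also have "\<dots> = (4/3)^Suc K * (real (3*K + 3) * real ((3*K + 2) choose Suc K))"
    by simp
  also have "\<dots> = real (2*K + 2) * ((4/3)^Suc K * real ((3*K + 3) choose Suc K))"
    by (simp only: absorb[symmetric] mult.left_commute)
  finally have "3 * choose_sum (2*K + 1) K + choose_sum (2*K + 2) K = (4/3)^Suc K * real ((3*K + 3) choose Suc K)"
    by (simp only: mult_cancel_left of_nat_eq_0_iff) simp
  moreover have "2*K + 2 + Suc K = 3*K + 3" by simp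
  ultimately show ?thesis using choose_sum_Suc[of "2*K + 2" K] by (simp only:)
qed

definition diag_coeff :: "nat \<Rightarrow> nat \<Rightarrow> real" where
  "diag_coeff j N = (2/3)^j * (1/9)^N * choose_sum (2*N + j) N"

lemma diag_coeff_0_right [simp]: "diag_coeff j 0 = (2/3)^j"
  by (simp add: diag_coeff_def choose_sum_def)

lemma diag_coeff_Suc_Suc:
  "diag_coeff (Suc j) (Suc K) = 2/3 * diag_coeff j (Suc K) + 1/3 * diag_coeff (Suc j + 2) K"
proof -
  have "2 * Suc K + Suc j = Suc (2 * Suc K + j)" "2*K + (Suc j + 2) = Suc (2 * Suc K + j)"
    by simp_all
  then have "diag_coeff (Suc j) (Suc K) = (2/3)^Suc j * (1/9)^Suc K
      * (choose_sum (2 * Suc K + j) (Suc K) + 4/3 * choose_sum (2*K + (Suc j + 2)) K)"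
    unfolding diag_coeff_def using choose_sum_Suc_Suc[of "2 * Suc K + j" K] by (simp only:)
  also have "\<dots> = 2/3 * diag_coeff j (Suc K) + 1/3 * diag_coeff (Suc j + 2) K"
    unfolding diag_coeff_def by (simp add: field_simps power_add)
  finally show ?thesis .
qed

lemma diag_coeff_0_Suc: "diag_coeff 0 (Suc K) = 1/2 * diag_coeff 1 K + 1/2 * diag_coeff 2 K"
  using choose_sum_diagonal[of K] unfolding diag_coeff_def by (simp add: field_simps)

lemma diag_coeff_eq_sum:
  "diag_coeff j N = (\<Sum>i=0..N. 2^(2*i + j) / 3^(2*N + i + j) * real ((2*N + j + i) choose i))"
proof -
  have "(2::real)^(2*i) = 4^i" "(3::real)^(2*N) = 9^N" for i
    by (simp_all add: power_mult)
  then show ?thesis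
    by (simp add: diag_coeff_def choose_sum_def sum_distrib_left power_add field_simps)
qed

text \<open>The factor 3/2 for j >= 1 absorbs the weight 1 = 3/2 * p of g_0 in the equation for g_1,
  so that \<^const>\<open>diag_coeff\<close> obeys one uniform recursion.\<close>

definition packing_coeff :: "nat \<Rightarrow> nat \<Rightarrow> real" where
  "packing_coeff j n =
     (if j \<le> n \<and> 3 dvd (n - j) then (if j = 0 then 1 else 3/2) * diag_coeff j ((n - j) div 3) else 0)"

lemma packing_coeff_diag:
  "n = j + 3*N \<Longrightarrow> packing_coeff j n = (if j = 0 then 1 else 3/2) * diag_coeff j N"
  by (simp add: packing_coeff_def)

lemma packing_coeff_eq_0: "(\<And>N. n \<noteq> j + 3*N) \<Longrightarrow> packing_coeff j n = 0"
proof -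
  assume off_diagonal: "\<And>N. n \<noteq> j + 3*N"
  have "\<not> (j \<le> n \<and> 3 dvd (n - j))"
    using off_diagonal[of "(n - j) div 3"] by auto
  then show ?thesis unfolding packing_coeff_def by (rule if_not_P)
qed

lemma packing_coeff_0_right: "packing_coeff j 0 = (if j = 0 then 1 else 0)"
  by (simp add: packing_coeff_def)

lemma packing_coeff_Suc:
  assumes "j \<ge> 1"
  shows "packing_coeff j (Suc m)
    = (if j = 1 then 1 else 2/3) * packing_coeff (j - 1) m + 1/3 * packing_coeff (j + 2) m"
proof (cases "\<exists>N. Suc m = j + 3*N")
  case True
  then obtain N where N: "Suc m = j + 3*N" by blast
  obtain i where i: "j = Suc i" using assms by (cases j) auto
  show ?thesis
  proof (cases N)
    case 0
    have "packing_coeff (j + 2) m = 0"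
      using N 0 by (intro packing_coeff_eq_0) auto
    then show ?thesis
      using N 0 i by (simp add: packing_coeff_diag[where N = 0])
  next
    case (Suc K)
    have "packing_coeff j (Suc m) = 3/2 * diag_coeff j (Suc K)"
      using N Suc i by (simp add: packing_coeff_diag[where N = "Suc K"])
    moreover have "packing_coeff (j - 1) m = (if j = 1 then 1 else 3/2) * diag_coeff i (Suc K)"
      using N Suc i by (simp add: packing_coeff_diag[where N = "Suc K"])
    moreover have "packing_coeff (j + 2) m = 3/2 * diag_coeff (j + 2) K"
      using N Suc by (simp add: packing_coeff_diag[where N = K])
    ultimately show ?thesis
      using diag_coeff_Suc_Suc[of i K] i by auto
  qed
next
  case False
  have "packing_coeff j (Suc m) = 0" "packing_coeff (j - 1) m = 0" "packing_coeff (j + 2) m = 0"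
    by (rule packing_coeff_eq_0, use False assms in presburger)+
  then show ?thesis by simp
qed

lemma packing_coeff_0_Suc_Suc:
  "packing_coeff 0 (Suc (Suc m)) = 1/3 * packing_coeff 1 m + 1/3 * packing_coeff 2 (Suc m)"
proof (cases "\<exists>K. m = 1 + 3*K")
  case True
  then obtain K where K: "m = 1 + 3*K" by blast
  have "packing_coeff 0 (Suc (Suc m)) = diag_coeff 0 (Suc K)"
    using K by (simp add: packing_coeff_diag[where N = "Suc K"])
  moreover have "packing_coeff 1 m = 3/2 * diag_coeff 1 K" "packing_coeff 2 (Suc m) = 3/2 * diag_coeff 2 K"
    using K by (simp_all add: packing_coeff_diag[where N = K])
  ultimately show ?thesis
    using diag_coeff_0_Suc[of K] by simp
next
  case False
  have "packing_coeff 0 (Suc (Suc m)) = 0" "packing_coeff 1 m = 0" "packing_coeff 2 (Suc m) = 0"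
    by (rule packing_coeff_eq_0, use False in presburger)+
  then show ?thesis by simp
qed

lemma packing_coeff_eq_sum:
  assumes "j \<ge> 1"
  shows "packing_coeff j (j + 3*N)
    = (\<Sum>i=0..N. 2^(2*i + j - 1) / 3^(2*N + i + j - 1) * real ((2*N + j + i) choose i))"
proof -
  obtain k where "j = Suc k" using assms by (cases j) auto
  then show ?thesis
    by (simp add: packing_coeff_diag diag_coeff_eq_sum sum_distrib_left mult.assoc)
qed

lemma packing_coeff_0_eq_sum:
  "packing_coeff 0 (3*N) = (\<Sum>i=0..N. 2^(2*i) / 3^(2*N + i) * real ((2*N + i) choose i))"
  by (simp add: packing_coeff_diag diag_coeff_eq_sum)

lemma third_packing_coeff_1_eq_sum:
  "1/3 * packing_coeff 1 (3*N + 1) = (\<Sum>i=0..N. 2^(2*i) / 3^(2*N + i + 1) * real ((2*N + 1 + i) choose i))"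
  by (simp add: packing_coeff_diag[where N = N] diag_coeff_eq_sum sum_distrib_left mult.assoc)

definition packing_eqs :: "'a::comm_ring_1 \<Rightarrow> 'a \<Rightarrow> (nat \<Rightarrow> 'a fps) \<Rightarrow> 'a fps \<Rightarrow> bool" where
  "packing_eqs p q g gb \<longleftrightarrow>
     g 0 = 1 + fps_X * gb + fps_const q * fps_X * g 2 \<and>
     gb = fps_const q * fps_X * g 1 \<and>
     g 1 = fps_X * g 0 + fps_const q * fps_X * g 3 \<and>
     (\<forall>i\<ge>2. g i = fps_const p * fps_X * g (i - 1) + fps_const q * fps_X * g (i + 2))"

lemma packing_eqs_nth:
  assumes "packing_eqs p q g gb"
  shows "fps_nth (g 0) 0 = 1"
    and "i \<noteq> 0 \<Longrightarrow> fps_nth (g i) 0 = 0"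
    and "fps_nth (g 0) (Suc 0) = 0"
    and "fps_nth (g 0) (Suc (Suc n)) = q * fps_nth (g 1) n + q * fps_nth (g 2) (Suc n)"
    and "fps_nth (g 1) (Suc n) = fps_nth (g 0) n + q * fps_nth (g 3) n"
    and "i \<ge> 2 \<Longrightarrow> fps_nth (g i) (Suc n) = p * fps_nth (g (i - 1)) n + q * fps_nth (g (i + 2)) n"
proof -
  have g0: "g 0 = 1 + fps_X * gb + fps_const q * fps_X * g 2"
    and gb: "gb = fps_const q * fps_X * g 1"
    and g1: "g 1 = fps_X * g 0 + fps_const q * fps_X * g 3"
    and gi: "\<And>i. i \<ge> 2 \<Longrightarrow> g i = fps_const p * fps_X * g (i - 1) + fps_const q * fps_X * g (i + 2)"
    using assms unfolding packing_eqs_def by blast+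
  show gi_0: "fps_nth (g i) 0 = 0" if "i \<noteq> 0" for i
  proof (cases "i = 1")
    case True
    show ?thesis unfolding True by (subst g1) (simp add: mult.assoc)
  next
    case False
    with that have "i \<ge> 2" by simp
    then show ?thesis by (subst gi) (simp_all add: mult.assoc)
  qed
  show "fps_nth (g 0) 0 = 1"
    by (subst g0) (simp add: mult.assoc)
  show "fps_nth (g 0) (Suc 0) = 0"
    by (subst g0, subst gb) (simp add: mult.assoc gi_0)
  show "fps_nth (g 0) (Suc (Suc n)) = q * fps_nth (g 1) n + q * fps_nth (g 2) (Suc n)"
    by (subst g0, subst gb) (simp add: mult.assoc)
  show "fps_nth (g 1) (Suc n) = fps_nth (g 0) n + q * fps_nth (g 3) n"
    by (subst g1) (simp add: mult.assoc)
  show "i \<ge> 2 \<Longrightarrow> fps_nth (g i) (Suc n) = p * fps_nth (g (i - 1)) n + q * fps_nth (g (i + 2)) n"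
    by (subst gi) (simp_all add: mult.assoc)
qed

lemma packing_eqs_nth_eq_packing_coeff:
  assumes "packing_eqs (2/3) (1/3) g gb"
  shows "fps_nth (g j) n = packing_coeff j n"
proof (induction n arbitrary: j rule: less_induct)
  case (less n)
  note g_nth = packing_eqs_nth[OF assms]
  consider "n = 0" | "n = 1" "j = 0" | m where "n = Suc (Suc m)" "j = 0" | m where "n = Suc m" "j \<ge> 1"
    by (cases n; cases "n - 1"; cases "j = 0") auto
  then show ?case
  proof cases
    case 1
    then show ?thesis by (cases "j = 0") (simp_all add: g_nth packing_coeff_0_right)
  next
    case 2
    then show ?thesis by (simp add: g_nth packing_coeff_def)
  next
    case 3
    then show ?thesis by (simp add: g_nth less.IH packing_coeff_0_Suc_Suc)
  next
    case (4 m)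
    show ?thesis
    proof (cases "j = 1")
      case True
      show ?thesis
        unfolding True using 4 g_nth(5)[of m] packing_coeff_Suc[of 1 m] by (simp add: less.IH numeral_3_eq_3)
    next
      case False
      with 4 show ?thesis by (simp add: g_nth less.IH packing_coeff_Suc)
    qed
  qed
qed

definition closed_solution :: "real fps \<Rightarrow> real fps \<Rightarrow> nat \<Rightarrow> real fps" where
  "closed_solution C a j = (if j = 0 then 4 * C else fps_X ^ j * (6 * C * a ^ j))"

lemma packing_eqs_closed_solution:
  fixes C a :: "real fps"
  assumes a: "a = fps_const (2/3) + fps_const (1/3) * a^3 * fps_X^3"
    and C: "4 * C = 1 + 2 * C * fps_X^3 * (a + a^2)"
  shows "packing_eqs (2/3) (1/3) (closed_solution C a) (fps_const (1/3) * fps_X * closed_solution C a 1)"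
proof -
  have q: "3 * fps_const (1/3 :: real) = 1" and p: "3 * fps_const (2/3 :: real) = 2"
    by (simp_all add: numeral_fps_const fps_const_mult [symmetric])
  have "4 * C = 1 + fps_X * (fps_const (1/3) * fps_X * (fps_X * (6 * C * a)))
      + fps_const (1/3) * fps_X * (fps_X^2 * (6 * C * a^2))"
    using C q by algebra
  moreover have "fps_X * (6 * C * a) = fps_X * (4 * C) + fps_const (1/3) * fps_X * (fps_X^3 * (6 * C * a^3))"
    using a p q by algebra
  moreover have "fps_X^i * (6 * C * a^i)
      = fps_const (2/3) * fps_X * (fps_X^(i - 1) * (6 * C * a^(i - 1)))
        + fps_const (1/3) * fps_X * (fps_X^(i + 2) * (6 * C * a^(i + 2)))" if "i \<ge> 2" for i
  proof -
    have step: "fps_X * Xl * (6 * C * (a * al))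
        = fps_const (2/3) * fps_X * (Xl * (6 * C * al))
          + fps_const (1/3) * fps_X * (Xl * fps_X^3 * (6 * C * (al * a^3)))" for Xl al
      using a by algebra
    from \<open>i \<ge> 2\<close> obtain l where i: "i = Suc l" by (cases i) auto
    then have shift: "i - 1 = l" "i + 2 = l + 3" by simp_all
    show ?thesis unfolding shift unfolding i power_Suc power_add by (rule step)
  qed
  ultimately show ?thesis
    unfolding packing_eqs_def closed_solution_def by (simp add: numeral_3_eq_3 eval_nat_numeral)
qed

lemma t_of_z_cubic:
  assumes t0: "fps_nth t 0 = 0" and tx: "fps_X = fps_const (27/4) * t * (1 - t)^2"
  shows "fps_X^3 = fps_const (27/4) * t_of_z t * (1 - t_of_z t)^2"
proof -
  define x :: "real fps" where "x = fps_X^3"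
  have x0: "fps_nth x 0 = 0" by (simp add: x_def)
  have "x = fps_X oo x" using x0 by simp
  also have "\<dots> = ((fps_const (27/4) * t) oo x) * ((1 - t)^2 oo x)"
    unfolding tx using x0 by (rule fps_compose_mult_distrib)
  also have "(fps_const (27/4) * t) oo x = fps_const (27/4) * t_of_z t"
    unfolding t_of_z_def x_def by (rule fps_const_mult_apply_left[symmetric])
  also have "(1 - t)^2 oo x = (1 - t_of_z t)^2"
    unfolding t_of_z_def x_def by (simp add: fps_compose_power[symmetric] fps_compose_sub_distrib)
  finally show ?thesis by (simp add: x_def mult.assoc)
qed

lemma
  assumes t0: "fps_nth t 0 = 0" and tx: "fps_X = fps_const (27/4) * t * (1 - t)^2"
  shows a_ser_cubic: "a_ser t = fps_const (2/3) + fps_const (1/3) * a_ser t ^ 3 * fps_X^3"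
    and C_ser_equation: "4 * C_ser t = 1 + 2 * C_ser t * fps_X^3 * (a_ser t + a_ser t ^ 2)"
proof -
  define T where "T = t_of_z t"
  define u where "u = inverse (1 - T)"
  have T0: "fps_nth T 0 = 0" by (simp add: T_def t_of_z_def t0)
  have u: "(1 - T) * u = 1"
    unfolding u_def by (rule inverse_mult_eq_1') (simp add: T0)
  have x: "fps_X^3 = fps_const (27/4) * T * (1 - T)^2"
    unfolding T_def using t0 tx by (rule t_of_z_cubic)
  have a: "a_ser t = fps_const (2/3) * u"
    by (simp add: a_ser_def T_def u_def)
  have C: "((1 - 3*T) * (4 - 3*T)) * C_ser t = 1"
    unfolding C_ser_def T_def[symmetric] by (rule inverse_mult_eq_1') (simp add: T0 numeral_fps_const)
  have constants: "3 * fps_const (2/3 :: real) = 2" "3 * fps_const (1/3 :: real) = 1" "4 * fps_const (27/4 :: real) = 27"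
    by (simp_all add: numeral_fps_const fps_const_mult [symmetric])
  show "a_ser t = fps_const (2/3) + fps_const (1/3) * a_ser t ^ 3 * fps_X^3"
    using u x a constants by algebra
  show "4 * C_ser t = 1 + 2 * C_ser t * fps_X^3 * (a_ser t + a_ser t ^ 2)"
    using u x a constants C by algebra
qed

lemma Abs_fps_closed_solution:
  "Abs_fps (closed_solution C a)
     = fps_const (2 * C) * (2 + fps_const a * V_ser) * inverse (1 - fps_const a * V_ser)"
proof -
  define w where "w = a * fps_X"
  define L where "L = fps_const a * V_ser"
  have L: "L = fps_X * fps_const w"
    unfolding L_def V_ser_def w_def by (simp add: mult.left_commute)
  have "inverse (fps_nth (1 - L) 0) = 1"
    by (simp add: L)
  then have inverse_L: "(1 - L) * inverse (1 - L) = 1"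
    unfolding fps_inverse_def[of "1 - L"] using fps_right_inverse[of "1 - L" 1] by (simp add: L)
  have "Abs_fps (closed_solution C a) * (1 - L) = fps_const (2 * C) * (2 + L)"
  proof (rule fps_ext)
    fix n
    have "Abs_fps (closed_solution C a) * (1 - L)
        = Abs_fps (closed_solution C a) - fps_X * (Abs_fps (closed_solution C a) * fps_const w)"
      unfolding L by (simp add: right_diff_distrib mult.left_commute)
    then have lhs: "fps_nth (Abs_fps (closed_solution C a) * (1 - L)) n
        = closed_solution C a n - (if n = 0 then 0 else closed_solution C a (n - 1) * w)"
      by simp
    have rhs: "fps_nth (fps_const (2 * C) * (2 + L)) n
        = 2 * C * ((if n = 0 then 2 else 0) + (if n = 1 then w else 0))"
      by (simp add: L fps_numeral_nth)
    consider "n = 0" | "n = 1" | k where "n = Suc (Suc k)"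
      by (metis One_nat_def not0_implies_Suc)
    then show "fps_nth (Abs_fps (closed_solution C a) * (1 - L)) n = fps_nth (fps_const (2 * C) * (2 + L)) n"
      unfolding lhs rhs by cases (simp_all add: closed_solution_def w_def algebra_simps)
  qed
  then have "Abs_fps (closed_solution C a) = fps_const (2 * C) * (2 + L) * inverse (1 - L)"
    by (metis inverse_L mult.assoc mult.right_neutral)
  then show ?thesis unfolding L_def .
qed

theorem theorem2:
  fixes g :: "nat \<Rightarrow> real fps" and gb :: "real fps" and t :: "real fps"
  defines "p \<equiv> fps_const (2/3 :: real)" and "q \<equiv> fps_const (1/3 :: real)"
  assumes eq0: "g 0 = 1 + fps_X * gb + q * fps_X * g 2"
      and eqb: "gb = q * fps_X * g 1"
      and eq1: "g 1 = fps_X * g 0 + q * fps_X * g 3"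
      and eqi: "\<And>i. i \<ge> 2 \<Longrightarrow> g i = p * fps_X * g (i - 1) + q * fps_X * g (i + 2)"
      and t0: "fps_nth t 0 = 0"
      and tx: "fps_X = fps_const (27/4) * t * (1 - t)^2"
  shows
    "Abs_fps g = fps_const (2 * C_ser t) * (2 + fps_const (a_ser t) * V_ser)
         * inverse (1 - fps_const (a_ser t) * V_ser)
     \<and> (\<forall>j n. fps_nth (g j) n \<noteq> 0 \<longrightarrow> j \<le> n \<and> 3 dvd (n - j))
     \<and> (\<forall>j\<ge>1. g j = fps_X ^ j * (6 * C_ser t * a_ser t ^ j))
     \<and> (\<forall>j\<ge>1. \<forall>N. fps_nth (g j) (j + 3 * N) =
           (\<Sum>i=0..N. 2 ^ (2*i + j - 1) / 3 ^ (2*N + i + j - 1) * real ((2*N + j + i) choose i)))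
     \<and> (\<forall>N. fps_nth (g 0) (3 * N) =
           (\<Sum>i=0..N. 2 ^ (2*i) / 3 ^ (2*N + i) * real ((2*N + i) choose i)))
     \<and> (\<forall>N. fps_nth gb (3 * N + 2) = 1/3 * fps_nth (g 1) (3 * N + 1)
           \<and> fps_nth gb (3 * N + 2) =
             (\<Sum>i=0..N. 2 ^ (2*i) / 3 ^ (2*N + i + 1) * real ((2*N + 1 + i) choose i)))"
proof -
  have "packing_eqs (2/3) (1/3) g gb"
    using eq0 eqb eq1 eqi unfolding packing_eqs_def p_def q_def by blast
  then have coeff: "fps_nth (g j) n = packing_coeff j n" for j n
    by (rule packing_eqs_nth_eq_packing_coeff)
  have "packing_eqs (2/3) (1/3) (closed_solution (C_ser t) (a_ser t))
      (fps_const (1/3) * fps_X * closed_solution (C_ser t) (a_ser t) 1)"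
    using a_ser_cubic[OF t0 tx] C_ser_equation[OF t0 tx] by (rule packing_eqs_closed_solution)
  then have closed: "g = closed_solution (C_ser t) (a_ser t)"
    by (auto intro!: fps_ext simp: coeff packing_eqs_nth_eq_packing_coeff)
  have gb: "fps_nth gb (3*N + 2) = 1/3 * fps_nth (g 1) (3*N + 1)" for N
    unfolding eqb q_def by (simp add: mult.assoc)
  have "Abs_fps g = fps_const (2 * C_ser t) * (2 + fps_const (a_ser t) * V_ser)
      * inverse (1 - fps_const (a_ser t) * V_ser)"
    unfolding closed by (rule Abs_fps_closed_solution)
  moreover have "\<forall>j n. fps_nth (g j) n \<noteq> 0 \<longrightarrow> j \<le> n \<and> 3 dvd (n - j)"
    by (simp add: coeff packing_coeff_def)
  moreover have "\<forall>j\<ge>1. g j = fps_X ^ j * (6 * C_ser t * a_ser t ^ j)"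
    by (simp add: closed closed_solution_def)
  moreover have "\<forall>j\<ge>1. \<forall>N. fps_nth (g j) (j + 3 * N) =
      (\<Sum>i=0..N. 2 ^ (2*i + j - 1) / 3 ^ (2*N + i + j - 1) * real ((2*N + j + i) choose i))"
    by (simp add: coeff packing_coeff_eq_sum)
  moreover have "\<forall>N. fps_nth (g 0) (3 * N) =
      (\<Sum>i=0..N. 2 ^ (2*i) / 3 ^ (2*N + i) * real ((2*N + i) choose i))"
    by (simp add: coeff packing_coeff_0_eq_sum)
  moreover have "\<forall>N. fps_nth gb (3 * N + 2) =
      (\<Sum>i=0..N. 2 ^ (2*i) / 3 ^ (2*N + i + 1) * real ((2*N + 1 + i) choose i))"
    by (simp only: gb coeff third_packing_coeff_1_eq_sum simp_thms)
  ultimately show ?thesis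
    using gb by blast
qed

end
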